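(* Let $(X,\Sigma)$ be a random pair valued in $\mathcal{X}\times\mathfrak{S}_n$ with $X\sim\mu$. Let $\mathcal{P}=\{\mathcal{C}_1,\dots,\mathcal{C}_K\}$ be a partition of $\mathcal{X}$ into $K\ge1$ measurable cells with $\mu(\mathcal{C}_k)>0$ for all $k$. Let $\mathcal{S}_{\mathcal{P}}$ be the set of rules of the form $s_{\mathcal{P},\bar\sigma}(x)=\sum_{k=1}^K\sigma_k\,\mathbb{I}\{x\in\mathcal{C}_k\}$ with $\bar\sigma=(\sigma_1,\dots,\sigma_K)\in\mathfrak{S}_n^K$. Then the set of minimizers of $\mathcal{R}$ over $\mathcal{S}_{\mathcal{P}}$ consists exactly of the rules $s_{\mathcal{P},\bar\sigma}$ such that, for every $k\in\{1,\dots,K\}$, $\sigma_k$ is a Kemeny median of $P_{\mathcal{C}_k}$. Moreover, $$\min_{s\in\mathcal{S}_{\mathcal{P}}}\mathcal{R}(s)=\sum_{k=1}^K\mu(\mathcal{C}_k)L^*_{P_{\mathcal{C}_k}}.$$ If in addition $P_{\mathcal{C}_k}\in\mathcal{T}$ for $1\le k\le K$, the risk minimizer over $\mathcal{S}_{\mathcal{P}}$ is unique and is given by $s^*_{\mathcal{P}}(x)=\sum_{k=1}^K\sigma^*_{P_{\mathcal{C}_k}}\,\mathbb{I}\{x\in\mathcal{C}_k\}$.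
   Context: $\mathfrak{S}_n$ is the set of permutations of $\{1,\dots,n\}$. The Kendall $\tau$ distance is $d_\tau(\sigma,\sigma')=\sum_{i<j}\mathbb{I}\{(\sigma(i)-\sigma(j))(\sigma'(i)-\sigma'(j))<0\}$. For a distribution $P$ on $\mathfrak{S}_n$: $L_P(\sigma)=\mathbb{E}_{\Sigma\sim P}[d_\tau(\Sigma,\sigma)]$, $L_P^*=\min_\sigma L_P(\sigma)$, and a Kemeny median of $P$ is any minimizer of $L_P$. For a measurable set $\mathcal{C}$ with $\mu(\mathcal{C})>0$, $P_{\mathcal{C}}$ is the conditional distribution of $\Sigma$ given $X\in\mathcal{C}$. $\mathcal{T}$ is the set of strictly stochastically transitive distributions. These are the $P$ whose pairwise probabilities $p_{i,j}=\mathbb{P}_{\Sigma\sim P}\{\Sigma(i)<\Sigma(j)\}$ satisfy (a) $p_{i,j}\ge1/2$ and $p_{j,k}\ge1/2\Rightarrow p_{i,k}\ge1/2$, and (b) $p_{i,j}\ne1/2$ for all $i<j$. For $P\in\mathcal{T}$ the Kemeny median is unique, denoted $\sigma^*_P$. The risk of a measurable rule $s:\mathcal{X}\to\mathfrak{S}_n$ is $\mathcal{R}(s)=\mathbb{E}[d_\tau(s(X),\Sigma)]$. *)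

theory Defs
  imports "HOL-Probability.Probability"
begin

definition perms :: "nat \<Rightarrow> (nat \<Rightarrow> nat) set" where
  "perms n = {\<sigma>. \<sigma> permutes {1..n}}"

definition kendall :: "nat \<Rightarrow> (nat \<Rightarrow> nat) \<Rightarrow> (nat \<Rightarrow> nat) \<Rightarrow> nat" where
  "kendall n \<sigma> \<sigma>' = card {(i, j). 1 \<le> i \<and> i < j \<and> j \<le> n \<and>
      (int (\<sigma> i) - int (\<sigma> j)) * (int (\<sigma>' i) - int (\<sigma>' j)) < 0}"

text \<open>A distribution on the permutations of {1..n} is given by its mass function P.\<close>
definition L_risk :: "nat \<Rightarrow> ((nat \<Rightarrow> nat) \<Rightarrow> real) \<Rightarrow> (nat \<Rightarrow> nat) \<Rightarrow> real" where
  "L_risk n P \<sigma> = (\<Sum>\<sigma>'\<in>perms n. P \<sigma>' * real (kendall n \<sigma>' \<sigma>))"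

definition L_star :: "nat \<Rightarrow> ((nat \<Rightarrow> nat) \<Rightarrow> real) \<Rightarrow> real" where
  "L_star n P = Min (L_risk n P ` perms n)"

definition kemeny_median :: "nat \<Rightarrow> ((nat \<Rightarrow> nat) \<Rightarrow> real) \<Rightarrow> (nat \<Rightarrow> nat) \<Rightarrow> bool" where
  "kemeny_median n P \<sigma> \<longleftrightarrow> \<sigma> \<in> perms n \<and> (\<forall>\<sigma>'\<in>perms n. L_risk n P \<sigma> \<le> L_risk n P \<sigma>')"

definition pairwise_prob :: "nat \<Rightarrow> ((nat \<Rightarrow> nat) \<Rightarrow> real) \<Rightarrow> nat \<Rightarrow> nat \<Rightarrow> real" where
  "pairwise_prob n P i j = (\<Sum>\<sigma>\<in>{\<sigma>\<in>perms n. \<sigma> i < \<sigma> j}. P \<sigma>)"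

text \<open>Strict stochastic transitivity (the class T).\<close>
definition SST :: "nat \<Rightarrow> ((nat \<Rightarrow> nat) \<Rightarrow> real) \<Rightarrow> bool" where
  "SST n P \<longleftrightarrow>
     (\<forall>i\<in>{1..n}. \<forall>j\<in>{1..n}. \<forall>k\<in>{1..n}.
        pairwise_prob n P i j \<ge> 1/2 \<and> pairwise_prob n P j k \<ge> 1/2 \<longrightarrow> pairwise_prob n P i k \<ge> 1/2)
   \<and> (\<forall>i\<in>{1..n}. \<forall>j\<in>{1..n}. i < j \<longrightarrow> pairwise_prob n P i j \<noteq> 1/2)"

text \<open>The unique Kemeny median of P (for P in T).\<close>
definition sigma_star :: "nat \<Rightarrow> ((nat \<Rightarrow> nat) \<Rightarrow> real) \<Rightarrow> (nat \<Rightarrow> nat)" where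
  "sigma_star n P = (THE \<sigma>. kemeny_median n P \<sigma>)"

definition cond_dist :: "'w measure \<Rightarrow> ('w \<Rightarrow> 'x) \<Rightarrow> ('w \<Rightarrow> (nat \<Rightarrow> nat)) \<Rightarrow> 'x set
     \<Rightarrow> (nat \<Rightarrow> nat) \<Rightarrow> real" where
  "cond_dist M X Sig C \<sigma> =
     measure M {\<omega>\<in>space M. X \<omega> \<in> C \<and> Sig \<omega> = \<sigma>} / measure M {\<omega>\<in>space M. X \<omega> \<in> C}"

definition risk :: "nat \<Rightarrow> 'w measure \<Rightarrow> ('w \<Rightarrow> 'x) \<Rightarrow> ('w \<Rightarrow> (nat \<Rightarrow> nat))
     \<Rightarrow> ('x \<Rightarrow> (nat \<Rightarrow> nat)) \<Rightarrow> real" where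
  "risk n M X Sig s = (\<integral>\<omega>. real (kendall n (s (X \<omega>)) (Sig \<omega>)) \<partial>M)"

text \<open>Piecewise constant rule: s(x) = sigma_k if x in C_k (k in {1..K});
  points lying in no cell (i.e. outside the feature space) are sent to id.\<close>
definition piecewise_rule :: "(nat \<Rightarrow> 'x set) \<Rightarrow> nat \<Rightarrow> (nat \<Rightarrow> (nat \<Rightarrow> nat))
     \<Rightarrow> 'x \<Rightarrow> (nat \<Rightarrow> nat)" where
  "piecewise_rule C K sbar x =
     (if \<exists>k\<in>{1..K}. x \<in> C k then sbar (THE k. k \<in> {1..K} \<and> x \<in> C k) else id)"

definition rule_class :: "nat \<Rightarrow> (nat \<Rightarrow> 'x set) \<Rightarrow> nat \<Rightarrow> ('x \<Rightarrow> (nat \<Rightarrow> nat)) set" where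
  "rule_class n C K = {piecewise_rule C K sbar | sbar. \<forall>k\<in>{1..K}. sbar k \<in> perms n}"

end

(*
  Conditioning on the cell of X, the risk of a piecewise constant rule is the sum over k of
  mu(C_k) L_{P_{C_k}}(sigma_k). The weights are positive and the sigma_k vary independently,
  so the sum is minimal exactly when every sigma_k minimises its own term, i.e. is a Kemeny
  median of P_{C_k}; the minimum is then the weighted sum of the L^*.

  For uniqueness, L_P(sigma) is the sum over pairs i < j of the probability that Sigma orders
  the pair differently from sigma. Under strict stochastic transitivity the majority relation
  p_ij > 1/2 is a strict total order, and since p_ij <> 1/2 a permutation attains the pairwise
  minimum on every pair iff it ranks as the majority does; exactly one permutation does so.
*)
theory Submission
  imports Defs
begin

lemma finite_perms: "finite (perms n)"
  unfolding perms_def using finite_permutations[of "{1..n}"] by simp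

lemma id_in_perms: "id \<in> perms n"
  by (simp add: perms_def permutes_id)

lemma perms_inj: "\<sigma> \<in> perms n \<Longrightarrow> i \<noteq> j \<Longrightarrow> \<sigma> i \<noteq> \<sigma> j"
  unfolding perms_def by (metis mem_Collect_eq permutes_inj injD)

lemma perms_in_range: "\<sigma> \<in> perms n \<Longrightarrow> i \<in> {1..n} \<Longrightarrow> \<sigma> i \<in> {1..n}"
  unfolding perms_def by (metis mem_Collect_eq permutes_in_image)

lemma perms_eq_Suc_card_less:
  assumes "\<sigma> \<in> perms n" "i \<in> {1..n}"
  shows "\<sigma> i = Suc (card {j\<in>{1..n}. \<sigma> j < \<sigma> i})"
proof -
  have p: "\<sigma> permutes {1..n}" using assms(1) by (simp add: perms_def)
  have "\<sigma> ` {j\<in>{1..n}. \<sigma> j < \<sigma> i} = {m\<in>\<sigma> ` {1..n}. m < \<sigma> i}" by auto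
  also have "\<dots> = {1..<\<sigma> i}"
    using permutes_image[OF p] perms_in_range[OF assms] by auto
  finally have "card (\<sigma> ` {j\<in>{1..n}. \<sigma> j < \<sigma> i}) = \<sigma> i - 1" by simp
  moreover have "inj_on \<sigma> {j\<in>{1..n}. \<sigma> j < \<sigma> i}"
    using permutes_inj_on[OF p] by (rule inj_on_subset) auto
  ultimately have "card {j\<in>{1..n}. \<sigma> j < \<sigma> i} = \<sigma> i - 1"
    by (simp add: card_image)
  thus ?thesis using perms_in_range[OF assms] by simp
qed

lemma perms_eqI_order:
  assumes "\<sigma> \<in> perms n" "\<tau> \<in> perms n"
    and "\<And>i j. i \<in> {1..n} \<Longrightarrow> j \<in> {1..n} \<Longrightarrow> \<sigma> i < \<sigma> j \<longleftrightarrow> \<tau> i < \<tau> j"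
  shows "\<sigma> = \<tau>"
proof
  fix i
  show "\<sigma> i = \<tau> i"
  proof (cases "i \<in> {1..n}")
    case True
    have "{j\<in>{1..n}. \<sigma> j < \<sigma> i} = {j\<in>{1..n}. \<tau> j < \<tau> i}"
      using assms(3) True by auto
    thus ?thesis
      using perms_eq_Suc_card_less[OF assms(1) True] perms_eq_Suc_card_less[OF assms(2) True] by simp
  next
    case False
    thus ?thesis using assms(1,2) by (simp add: perms_def permutes_not_in)
  qed
qed

text \<open>The witness sends each element to one plus the number of its \<open>R\<close>-predecessors.\<close>
lemma perm_realizing_strict_order:
  assumes irrefl: "\<And>i. i \<in> {1..n} \<Longrightarrow> \<not> R i i"
    and trans: "\<And>i j k. i \<in> {1..n} \<Longrightarrow> j \<in> {1..n} \<Longrightarrow> k \<in> {1..n} \<Longrightarrow> R i j \<Longrightarrow> R j k \<Longrightarrow> R i k"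
    and total: "\<And>i j. i \<in> {1..n} \<Longrightarrow> j \<in> {1..n} \<Longrightarrow> i \<noteq> j \<Longrightarrow> R i j \<or> R j i"
  obtains \<sigma> where "\<sigma> \<in> perms n" "\<And>i j. i \<in> {1..n} \<Longrightarrow> j \<in> {1..n} \<Longrightarrow> \<sigma> i < \<sigma> j \<longleftrightarrow> R i j"
proof -
  define \<sigma> where "\<sigma> i = (if i \<in> {1..n} then Suc (card {j\<in>{1..n}. R j i}) else i)" for i
  have less: "\<sigma> i < \<sigma> k" if "i \<in> {1..n}" "k \<in> {1..n}" "R i k" for i k
  proof -
    have "{j\<in>{1..n}. R j i} \<subset> {j\<in>{1..n}. R j k}"
      using trans[OF _ that(1,2) _ that(3)] that irrefl by blast
    thus ?thesis using that unfolding \<sigma>_def by (simp add: psubset_card_mono)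
  qed
  have order: "\<sigma> i < \<sigma> j \<longleftrightarrow> R i j" if "i \<in> {1..n}" "j \<in> {1..n}" for i j
  proof (cases "i = j")
    case True
    thus ?thesis using irrefl that by simp
  next
    case False
    have "\<not> (R i j \<and> R j i)" using trans[OF that(1,2,1)] irrefl[OF that(1)] by blast
    thus ?thesis using total[OF that False] less[OF that] less[OF that(2,1)] by auto
  qed
  have range: "\<sigma> i \<in> {1..n}" if "i \<in> {1..n}" for i
  proof -
    have "card {j\<in>{1..n}. R j i} \<le> card ({1..n} - {i})"
      using irrefl by (intro card_mono) auto
    thus ?thesis using that unfolding \<sigma>_def by auto
  qed
  have inj: "inj_on \<sigma> {1..n}"
  proof (rule inj_onI, rule ccontr)
    fix i j assume ij: "i \<in> {1..n}" "j \<in> {1..n}" "\<sigma> i = \<sigma> j" "i \<noteq> j"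
    show False using total[OF ij(1,2,4)] order[OF ij(1,2)] order[OF ij(2,1)] ij(3) by auto
  qed
  have "\<sigma> ` {1..n} = {1..n}"
    by (rule endo_inj_surj) (use range inj in auto)
  with inj have "bij_betw \<sigma> {1..n} {1..n}"
    by (simp add: bij_betw_def)
  hence "\<sigma> \<in> perms n"
    unfolding perms_def by (auto intro!: bij_imp_permutes simp: \<sigma>_def)
  show thesis by (rule that[OF \<open>\<sigma> \<in> perms n\<close> order])
qed

lemma kendall_sym: "kendall n \<sigma> \<tau> = kendall n \<tau> \<sigma>"
  unfolding kendall_def by (simp add: mult.commute)

definition index_pairs :: "nat \<Rightarrow> (nat \<times> nat) set" where
  "index_pairs n = {(i, j). 1 \<le> i \<and> i < j \<and> j \<le> n}"

lemma finite_index_pairs: "finite (index_pairs n)"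
  by (rule finite_subset[of _ "{1..n} \<times> {1..n}"]) (auto simp: index_pairs_def)

lemma kendall_eq_card_discordant:
  assumes "\<sigma> \<in> perms n" "\<tau> \<in> perms n"
  shows "kendall n \<sigma> \<tau> = card {x \<in> index_pairs n. (\<sigma> (fst x) < \<sigma> (snd x)) \<noteq> (\<tau> (fst x) < \<tau> (snd x))}"
proof -
  have sign: "(int (\<sigma> i) - int (\<sigma> j)) * (int (\<tau> i) - int (\<tau> j)) < 0 \<longleftrightarrow> (\<sigma> i < \<sigma> j) \<noteq> (\<tau> i < \<tau> j)"
    if "i \<noteq> j" for i j
    using perms_inj[OF assms(1) that] perms_inj[OF assms(2) that]
    by (auto simp: mult_less_0_iff)
  have "{(i, j). 1 \<le> i \<and> i < j \<and> j \<le> n \<and>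
      (int (\<sigma> i) - int (\<sigma> j)) * (int (\<tau> i) - int (\<tau> j)) < 0}
    = {x \<in> index_pairs n. (\<sigma> (fst x) < \<sigma> (snd x)) \<noteq> (\<tau> (fst x) < \<tau> (snd x))}"
    using sign by (auto simp: index_pairs_def)
  thus ?thesis unfolding kendall_def by simp
qed

lemma pairwise_prob_eq_sum_if: "pairwise_prob n P i j = (\<Sum>\<sigma>\<in>perms n. if \<sigma> i < \<sigma> j then P \<sigma> else 0)"
  unfolding pairwise_prob_def by (rule sum.inter_filter[OF finite_perms])

lemma pairwise_prob_swap:
  assumes "sum P (perms n) = 1" "i \<noteq> j"
  shows "pairwise_prob n P j i = 1 - pairwise_prob n P i j"
proof -
  have "pairwise_prob n P i j + pairwise_prob n P j i = sum P (perms n)"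
    unfolding pairwise_prob_eq_sum_if sum.distrib[symmetric]
    by (rule sum.cong) (auto dest: perms_inj[OF _ assms(2)])
  thus ?thesis using assms(1) by simp
qed

definition pair_disagreement :: "nat \<Rightarrow> ((nat \<Rightarrow> nat) \<Rightarrow> real) \<Rightarrow> (nat \<Rightarrow> nat) \<Rightarrow> nat \<times> nat \<Rightarrow> real" where
  "pair_disagreement n P \<sigma> =
     (\<lambda>(i, j). if \<sigma> i < \<sigma> j then pairwise_prob n P j i else pairwise_prob n P i j)"

lemma L_risk_eq_sum_pair_disagreement:
  assumes "\<sigma> \<in> perms n"
  shows "L_risk n P \<sigma> = (\<Sum>x\<in>index_pairs n. pair_disagreement n P \<sigma> x)"
proof -
  let ?disc = "\<lambda>\<tau> x. (\<tau> (fst x) < \<tau> (snd x)) \<noteq> (\<sigma> (fst x) < \<sigma> (snd x))"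
  have "L_risk n P \<sigma> = (\<Sum>\<tau>\<in>perms n. \<Sum>x\<in>index_pairs n. if ?disc \<tau> x then P \<tau> else 0)"
    unfolding L_risk_def
  proof (intro sum.cong refl)
    fix \<tau> assume "\<tau> \<in> perms n"
    hence "real (kendall n \<tau> \<sigma>) = (\<Sum>x\<in>{x\<in>index_pairs n. ?disc \<tau> x}. 1)"
      using kendall_eq_card_discordant[OF _ assms] by simp
    also have "\<dots> = (\<Sum>x\<in>index_pairs n. if ?disc \<tau> x then 1 else 0)"
      by (rule sum.inter_filter[OF finite_index_pairs])
    finally have "real (kendall n \<tau> \<sigma>) = \<dots>" .
    thus "P \<tau> * real (kendall n \<tau> \<sigma>) = (\<Sum>x\<in>index_pairs n. if ?disc \<tau> x then P \<tau> else 0)"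
      by (auto simp: sum_distrib_left intro!: sum.cong)
  qed
  also have "\<dots> = (\<Sum>x\<in>index_pairs n. \<Sum>\<tau>\<in>perms n. if ?disc \<tau> x then P \<tau> else 0)"
    by (rule sum.swap)
  also have "\<dots> = (\<Sum>x\<in>index_pairs n. pair_disagreement n P \<sigma> x)"
  proof (intro sum.cong refl, clarify)
    fix i j assume "(i, j) \<in> index_pairs n"
    hence "i \<noteq> j" by (simp add: index_pairs_def)
    thus "(\<Sum>\<tau>\<in>perms n. if ?disc \<tau> (i, j) then P \<tau> else 0) =
      pair_disagreement n P \<sigma> (i, j)"
      unfolding pair_disagreement_def pairwise_prob_eq_sum_if
      by (auto intro!: sum.cong dest: perms_inj)
  qed
  finally show ?thesis .
qed

definition majority :: "nat \<Rightarrow> ((nat \<Rightarrow> nat) \<Rightarrow> real) \<Rightarrow> nat \<Rightarrow> nat \<Rightarrow> bool" where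
  "majority n P i j \<longleftrightarrow> pairwise_prob n P i j > 1/2"

lemma majority_irrefl: "\<not> majority n P i i"
  by (simp add: majority_def pairwise_prob_def)

lemma majority_asym:
  assumes "sum P (perms n) = 1" "majority n P i j"
  shows "\<not> majority n P j i"
proof (cases "i = j")
  case False
  thus ?thesis using assms pairwise_prob_swap[OF assms(1) False] by (simp add: majority_def)
qed (use assms majority_irrefl in simp)

lemma SST_pairwise_prob_neq_half:
  assumes "sum P (perms n) = 1" "SST n P" "i \<in> {1..n}" "j \<in> {1..n}" "i \<noteq> j"
  shows "pairwise_prob n P i j \<noteq> 1/2"
proof (cases "i < j")
  case True
  thus ?thesis using assms(2-4) unfolding SST_def by blast
next
  case False
  hence "pairwise_prob n P j i \<noteq> 1/2" using assms(2-5) unfolding SST_def by auto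
  thus ?thesis using pairwise_prob_swap[OF assms(1,5)] by simp
qed

lemma SST_majority_total:
  assumes "sum P (perms n) = 1" "SST n P" "i \<in> {1..n}" "j \<in> {1..n}" "i \<noteq> j"
  shows "majority n P i j \<or> majority n P j i"
  using SST_pairwise_prob_neq_half[OF assms] pairwise_prob_swap[OF assms(1,5)]
  unfolding majority_def by auto

lemma SST_majority_trans:
  assumes "sum P (perms n) = 1" "SST n P" "i \<in> {1..n}" "j \<in> {1..n}" "k \<in> {1..n}"
    and "majority n P i j" "majority n P j k"
  shows "majority n P i k"
proof -
  have "pairwise_prob n P i j \<ge> 1/2" "pairwise_prob n P j k \<ge> 1/2"
    using assms(6,7) by (simp_all add: majority_def)
  hence "pairwise_prob n P i k \<ge> 1/2" using assms(2-5) unfolding SST_def by blast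
  moreover have "i \<noteq> k" using assms(1,6,7) majority_asym by blast
  ultimately show ?thesis
    using SST_pairwise_prob_neq_half[OF assms(1-3,5)] unfolding majority_def by auto
qed

definition ranks_by_majority :: "nat \<Rightarrow> ((nat \<Rightarrow> nat) \<Rightarrow> real) \<Rightarrow> (nat \<Rightarrow> nat) \<Rightarrow> bool" where
  "ranks_by_majority n P \<sigma> \<longleftrightarrow> (\<forall>i\<in>{1..n}. \<forall>j\<in>{1..n}. \<sigma> i < \<sigma> j \<longleftrightarrow> majority n P i j)"

lemma SST_ex_ranks_by_majority:
  assumes "sum P (perms n) = 1" "SST n P"
  shows "\<exists>\<sigma>\<in>perms n. ranks_by_majority n P \<sigma>"
proof -
  obtain \<sigma> where "\<sigma> \<in> perms n"
    "\<And>i j. i \<in> {1..n} \<Longrightarrow> j \<in> {1..n} \<Longrightarrow> \<sigma> i < \<sigma> j \<longleftrightarrow> majority n P i j"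
    by (rule perm_realizing_strict_order[of n "majority n P"])
      (use majority_irrefl SST_majority_trans[OF assms] SST_majority_total[OF assms] in blast)+
  thus ?thesis unfolding ranks_by_majority_def by blast
qed

lemma ranks_by_majorityI_index_pairs:
  assumes "sum P (perms n) = 1" "SST n P" "\<sigma> \<in> perms n"
    and agree: "\<And>i j. (i, j) \<in> index_pairs n \<Longrightarrow> \<sigma> i < \<sigma> j \<longleftrightarrow> majority n P i j"
  shows "ranks_by_majority n P \<sigma>"
  unfolding ranks_by_majority_def
proof (intro ballI)
  fix i j assume ij: "i \<in> {1..n}" "j \<in> {1..n}"
  consider "i < j" | "i = j" | "j < i" by linarith
  thus "\<sigma> i < \<sigma> j \<longleftrightarrow> majority n P i j"
  proof cases
    case 1
    thus ?thesis using agree ij by (simp add: index_pairs_def)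
  next
    case 2
    thus ?thesis using majority_irrefl by simp
  next
    case 3
    hence "\<sigma> i \<noteq> \<sigma> j" "(j, i) \<in> index_pairs n" using perms_inj[OF assms(3)] ij by (auto simp: index_pairs_def)
    thus ?thesis
      using agree[of j i] majority_asym[OF assms(1)] SST_majority_total[OF assms(1,2) ij] 3 by auto
  qed
qed

text \<open>On each pair, a permutation ranking by majority pays the smaller of the two
  complementary probabilities \<open>p\<^sub>i\<^sub>j\<close> and \<open>1 - p\<^sub>i\<^sub>j\<close>, which differ since \<open>p\<^sub>i\<^sub>j \<noteq> 1/2\<close>.\<close>
lemma pair_disagreement_majority_le:
  assumes "sum P (perms n) = 1" "SST n P" "ranks_by_majority n P \<sigma>" and x: "x \<in> index_pairs n"
  shows "pair_disagreement n P \<sigma> x \<le> pair_disagreement n P \<tau> x"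
    and "pair_disagreement n P \<sigma> x = pair_disagreement n P \<tau> x \<Longrightarrow>
      \<tau> (fst x) < \<tau> (snd x) \<longleftrightarrow> majority n P (fst x) (snd x)"
proof -
  obtain i j where ij: "x = (i, j)" "i \<in> {1..n}" "j \<in> {1..n}" "i \<noteq> j"
    using x unfolding index_pairs_def by auto
  have "pairwise_prob n P i j \<noteq> 1/2" "pairwise_prob n P j i = 1 - pairwise_prob n P i j"
    using SST_pairwise_prob_neq_half[OF assms(1,2) ij(2-4)] pairwise_prob_swap[OF assms(1) ij(4)] .
  moreover have "\<sigma> i < \<sigma> j \<longleftrightarrow> majority n P i j"
    using assms(3) ij unfolding ranks_by_majority_def by blast
  ultimately show "pair_disagreement n P \<sigma> x \<le> pair_disagreement n P \<tau> x"
    and "pair_disagreement n P \<sigma> x = pair_disagreement n P \<tau> x \<Longrightarrow>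
      \<tau> (fst x) < \<tau> (snd x) \<longleftrightarrow> majority n P (fst x) (snd x)"
    unfolding pair_disagreement_def majority_def ij(1) by (auto split: if_splits)
qed

lemma SST_kemeny_median_iff_ranks_by_majority:
  assumes sum1: "sum P (perms n) = 1" and sst: "SST n P" and \<sigma>: "\<sigma> \<in> perms n"
  shows "kemeny_median n P \<sigma> \<longleftrightarrow> ranks_by_majority n P \<sigma>"
proof
  obtain \<sigma>0 where \<sigma>0: "\<sigma>0 \<in> perms n" "ranks_by_majority n P \<sigma>0"
    using SST_ex_ranks_by_majority[OF sum1 sst] by blast
  note le = pair_disagreement_majority_le(1)[OF sum1 sst \<sigma>0(2)]
  assume "kemeny_median n P \<sigma>"
  hence "L_risk n P \<sigma> \<le> L_risk n P \<sigma>0" using \<sigma>0 by (simp add: kemeny_median_def)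
  moreover have "(\<Sum>x\<in>index_pairs n. pair_disagreement n P \<sigma>0 x) \<le> (\<Sum>x\<in>index_pairs n. pair_disagreement n P \<sigma> x)"
    by (rule sum_mono) (rule le)
  ultimately have sum_eq: "(\<Sum>x\<in>index_pairs n. pair_disagreement n P \<sigma>0 x) = (\<Sum>x\<in>index_pairs n. pair_disagreement n P \<sigma> x)"
    by (simp add: L_risk_eq_sum_pair_disagreement \<sigma> \<sigma>0)
  show "ranks_by_majority n P \<sigma>"
  proof (rule ranks_by_majorityI_index_pairs[OF sum1 sst \<sigma>])
    fix i j assume ij: "(i, j) \<in> index_pairs n"
    have "pair_disagreement n P \<sigma>0 (i, j) = pair_disagreement n P \<sigma> (i, j)"
      using sum_mono_inv[OF sum_eq le ij finite_index_pairs] .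
    thus "\<sigma> i < \<sigma> j \<longleftrightarrow> majority n P i j"
      using pair_disagreement_majority_le(2)[OF sum1 sst \<sigma>0(2) ij] by simp
  qed
next
  assume "ranks_by_majority n P \<sigma>"
  hence "L_risk n P \<sigma> \<le> L_risk n P \<tau>" if "\<tau> \<in> perms n" for \<tau>
    using pair_disagreement_majority_le(1)[OF sum1 sst] that \<sigma>
    by (simp add: L_risk_eq_sum_pair_disagreement sum_mono)
  thus "kemeny_median n P \<sigma>" unfolding kemeny_median_def using \<sigma> by blast
qed

lemma kemeny_median_iff_sigma_star:
  assumes "sum P (perms n) = 1" "SST n P"
  shows "kemeny_median n P \<sigma> \<longleftrightarrow> \<sigma> = sigma_star n P"
proof -
  obtain \<sigma>0 where \<sigma>0: "\<sigma>0 \<in> perms n" "ranks_by_majority n P \<sigma>0"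
    using SST_ex_ranks_by_majority[OF assms] by blast
  have median_iff: "kemeny_median n P \<tau> \<longleftrightarrow> \<tau> = \<sigma>0" for \<tau>
  proof
    assume "kemeny_median n P \<tau>"
    moreover from this have \<tau>: "\<tau> \<in> perms n" by (simp add: kemeny_median_def)
    ultimately have "ranks_by_majority n P \<tau>"
      using SST_kemeny_median_iff_ranks_by_majority[OF assms] by blast
    thus "\<tau> = \<sigma>0"
      using \<sigma>0(2) by (intro perms_eqI_order[OF \<tau> \<sigma>0(1)]) (simp add: ranks_by_majority_def)
  qed (use SST_kemeny_median_iff_ranks_by_majority[OF assms \<sigma>0(1)] \<sigma>0(2) in simp)
  hence "sigma_star n P = \<sigma>0"
    unfolding sigma_star_def by blast
  thus ?thesis using median_iff by simp
qed

lemma L_star_le: "\<sigma> \<in> perms n \<Longrightarrow> L_star n P \<le> L_risk n P \<sigma>"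
  unfolding L_star_def using finite_perms by simp

lemma L_star_attained: "\<exists>\<sigma>\<in>perms n. L_risk n P \<sigma> = L_star n P"
proof -
  have "L_star n P \<in> L_risk n P ` perms n"
    unfolding L_star_def using finite_perms id_in_perms by (intro Min_in) auto
  thus ?thesis by force
qed

lemma piecewise_rule_eq:
  assumes "disjoint_family_on C {1..K}" "k \<in> {1..K}" "x \<in> C k"
  shows "piecewise_rule C K sbar x = sbar k"
proof -
  have "(THE k. k \<in> {1..K} \<and> x \<in> C k) = k"
    using assms unfolding disjoint_family_on_def by (intro the_equality) blast+
  thus ?thesis using assms unfolding piecewise_rule_def by auto
qed

lemma piecewise_rule_cong:
  assumes "disjoint_family_on C {1..K}" "\<And>k. k \<in> {1..K} \<Longrightarrow> a k = b k"
  shows "piecewise_rule C K a = piecewise_rule C K b"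
proof
  fix x
  show "piecewise_rule C K a x = piecewise_rule C K b x"
  proof (cases "\<exists>k\<in>{1..K}. x \<in> C k")
    case True
    then obtain k where "k \<in> {1..K}" "x \<in> C k" by blast
    thus ?thesis using piecewise_rule_eq[OF assms(1)] assms(2) by metis
  qed (simp add: piecewise_rule_def)
qed

lemma weighted_sum_minimal_iff:
  fixes w :: "'i \<Rightarrow> real" and f :: "'i \<Rightarrow> 'a \<Rightarrow> real"
  assumes "finite I" "\<And>k. k \<in> I \<Longrightarrow> w k > 0" "\<And>k. k \<in> I \<Longrightarrow> s k \<in> A"
  shows "(\<forall>t. (\<forall>k\<in>I. t k \<in> A) \<longrightarrow> (\<Sum>k\<in>I. w k * f k (s k)) \<le> (\<Sum>k\<in>I. w k * f k (t k)))
     \<longleftrightarrow> (\<forall>k\<in>I. \<forall>a\<in>A. f k (s k) \<le> f k a)"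
proof
  assume min: "\<forall>t. (\<forall>k\<in>I. t k \<in> A) \<longrightarrow> (\<Sum>k\<in>I. w k * f k (s k)) \<le> (\<Sum>k\<in>I. w k * f k (t k))"
  show "\<forall>k\<in>I. \<forall>a\<in>A. f k (s k) \<le> f k a"
  proof (intro ballI)
    fix k a assume k: "k \<in> I" and a: "a \<in> A"
    have "(\<Sum>j\<in>I. w j * f j ((s(k := a)) j)) = w k * f k a + (\<Sum>j\<in>I-{k}. w j * f j (s j))"
      by (simp add: sum.remove[OF assms(1) k])
    also have "\<dots> = (\<Sum>j\<in>I. w j * f j (s j)) - w k * f k (s k) + w k * f k a"
      by (simp add: sum.remove[OF assms(1) k])
    finally have upd: "(\<Sum>j\<in>I. w j * f j ((s(k := a)) j)) = \<dots>" .
    have "(\<Sum>j\<in>I. w j * f j (s j)) \<le> (\<Sum>j\<in>I. w j * f j ((s(k := a)) j))"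
      using min a assms(3) by simp
    with upd show "f k (s k) \<le> f k a" using assms(2)[OF k] by simp
  qed
next
  assume "\<forall>k\<in>I. \<forall>a\<in>A. f k (s k) \<le> f k a"
  thus "\<forall>t. (\<forall>k\<in>I. t k \<in> A) \<longrightarrow> (\<Sum>k\<in>I. w k * f k (s k)) \<le> (\<Sum>k\<in>I. w k * f k (t k))"
    using assms(2) by (auto intro!: sum_mono mult_left_mono simp: less_imp_le)
qed

locale partitioned_ranking_model = prob_space M
  for M :: "'w measure" and N :: "'x measure" and X :: "'w \<Rightarrow> 'x" and Sig :: "'w \<Rightarrow> nat \<Rightarrow> nat"
    and n K :: nat and C :: "nat \<Rightarrow> 'x set" +
  assumes X_measurable: "X \<in> M \<rightarrow>\<^sub>M N"
    and Sig_measurable: "Sig \<in> M \<rightarrow>\<^sub>M count_space (perms n)"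
    and cell_sets: "\<And>k. k \<in> {1..K} \<Longrightarrow> C k \<in> sets N"
    and cells_disjoint: "disjoint_family_on C {1..K}"
    and cells_cover: "(\<Union>k\<in>{1..K}. C k) = space N"
    and cell_mass_pos: "\<And>k. k \<in> {1..K} \<Longrightarrow> measure (distr M N X) (C k) > 0"
begin

abbreviation cell_mass :: "nat \<Rightarrow> real" where
  "cell_mass k \<equiv> measure (distr M N X) (C k)"

abbreviation cell_dist :: "nat \<Rightarrow> (nat \<Rightarrow> nat) \<Rightarrow> real" where
  "cell_dist k \<equiv> cond_dist M X Sig (C k)"

definition cell_event :: "nat \<Rightarrow> (nat \<Rightarrow> nat) \<Rightarrow> 'w set" where
  "cell_event k \<sigma> = {\<omega>\<in>space M. X \<omega> \<in> C k \<and> Sig \<omega> = \<sigma>}"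

lemma cell_mass_eq: "k \<in> {1..K} \<Longrightarrow> cell_mass k = prob {\<omega>\<in>space M. X \<omega> \<in> C k}"
  using measure_distr[OF X_measurable cell_sets] by (simp add: vimage_def Int_def conj_commute)

lemma cell_event_sets: "k \<in> {1..K} \<Longrightarrow> \<sigma> \<in> perms n \<Longrightarrow> cell_event k \<sigma> \<in> events"
proof -
  assume "k \<in> {1..K}" "\<sigma> \<in> perms n"
  have "cell_event k \<sigma> = (X -` C k \<inter> space M) \<inter> (Sig -` {\<sigma>} \<inter> space M)"
    by (auto simp: cell_event_def)
  thus ?thesis
    using measurable_sets[OF X_measurable cell_sets[OF \<open>k \<in> {1..K}\<close>]]
      measurable_sets[OF Sig_measurable, of "{\<sigma>}"] \<open>\<sigma> \<in> perms n\<close> by auto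
qed

lemma prob_cell_event: "k \<in> {1..K} \<Longrightarrow> prob (cell_event k \<sigma>) = cell_mass k * cell_dist k \<sigma>"
  using cell_mass_pos[of k] cell_mass_eq[of k] by (simp add: cond_dist_def cell_event_def)

lemma sum_cell_dist: "k \<in> {1..K} \<Longrightarrow> sum (cell_dist k) (perms n) = 1"
proof -
  assume k: "k \<in> {1..K}"
  have "(\<Union>\<sigma>\<in>perms n. cell_event k \<sigma>) = {\<omega>\<in>space M. X \<omega> \<in> C k}"
    using measurable_space[OF Sig_measurable] by (auto simp: cell_event_def)
  moreover have "prob (\<Union>\<sigma>\<in>perms n. cell_event k \<sigma>) = (\<Sum>\<sigma>\<in>perms n. prob (cell_event k \<sigma>))"
    using cell_event_sets[OF k]
    by (intro measure_finite_Union finite_perms) (auto simp: disjoint_family_on_def cell_event_def)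
  ultimately have "cell_mass k * sum (cell_dist k) (perms n) = cell_mass k"
    using cell_mass_eq[OF k] by (simp add: prob_cell_event[OF k] sum_distrib_left)
  thus ?thesis using cell_mass_pos[OF k] by simp
qed

lemma kendall_piecewise_rule_eq_sum:
  assumes "\<omega> \<in> space M"
  shows "real (kendall n (piecewise_rule C K sbar (X \<omega>)) (Sig \<omega>)) =
    (\<Sum>k\<in>{1..K}. \<Sum>\<sigma>\<in>perms n. indicator (cell_event k \<sigma>) \<omega> * real (kendall n (sbar k) \<sigma>))"
proof -
  obtain k0 where k0: "k0 \<in> {1..K}" "X \<omega> \<in> C k0"
    using measurable_space[OF X_measurable assms] cells_cover by blast
  have Sig: "Sig \<omega> \<in> perms n" using measurable_space[OF Sig_measurable assms] by simp
  have "X \<omega> \<in> C k \<longleftrightarrow> k = k0" if "k \<in> {1..K}" for k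
    using k0 that cells_disjoint unfolding disjoint_family_on_def by blast
  hence "(\<Sum>k\<in>{1..K}. \<Sum>\<sigma>\<in>perms n. indicator (cell_event k \<sigma>) \<omega> * real (kendall n (sbar k) \<sigma>))
    = (\<Sum>k\<in>{1..K}. if k = k0 then \<Sum>\<sigma>\<in>perms n. if \<sigma> = Sig \<omega> then real (kendall n (sbar k) \<sigma>) else 0 else 0)"
    using assms by (intro sum.cong) (auto simp: cell_event_def indicator_def intro!: sum.cong)
  also have "\<dots> = real (kendall n (sbar k0) (Sig \<omega>))"
    using k0(1) Sig finite_perms by simp
  finally show ?thesis using piecewise_rule_eq[OF cells_disjoint k0] by simp
qed

lemma risk_piecewise_rule:
  "risk n M X Sig (piecewise_rule C K sbar) = (\<Sum>k\<in>{1..K}. cell_mass k * L_risk n (cell_dist k) (sbar k))"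
proof -
  have int: "integrable M (\<lambda>\<omega>. indicator (cell_event k \<sigma>) \<omega> * real (kendall n (sbar k) \<sigma>))"
    if "k \<in> {1..K}" "\<sigma> \<in> perms n" for k \<sigma>
    using cell_event_sets[OF that] by (intro integrable_mult_left integrable_real_indicator)
      (auto simp: less_top[symmetric])
  have "risk n M X Sig (piecewise_rule C K sbar) =
    (\<integral>\<omega>. (\<Sum>k\<in>{1..K}. \<Sum>\<sigma>\<in>perms n. indicator (cell_event k \<sigma>) \<omega> * real (kendall n (sbar k) \<sigma>)) \<partial>M)"
    unfolding risk_def by (rule Bochner_Integration.integral_cong[OF refl kendall_piecewise_rule_eq_sum])
  also have "\<dots> = (\<Sum>k\<in>{1..K}. \<Sum>\<sigma>\<in>perms n. prob (cell_event k \<sigma>) * real (kendall n (sbar k) \<sigma>))"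
    using int cell_event_sets by (simp add: integrable_sum)
  also have "\<dots> = (\<Sum>k\<in>{1..K}. cell_mass k * L_risk n (cell_dist k) (sbar k))"
    by (intro sum.cong refl)
      (simp add: prob_cell_event L_risk_def sum_distrib_left kendall_sym[of n "sbar _"] mult.assoc)
  finally show ?thesis .
qed

end

context partitioned_ranking_model
begin

lemma risk_minimal_iff_kemeny_medians:
  assumes "\<forall>k\<in>{1..K}. sbar k \<in> perms n"
  shows "(\<forall>s\<in>rule_class n C K. risk n M X Sig (piecewise_rule C K sbar) \<le> risk n M X Sig s)
    \<longleftrightarrow> (\<forall>k\<in>{1..K}. kemeny_median n (cell_dist k) (sbar k))"
proof -
  have "(\<forall>s\<in>rule_class n C K. risk n M X Sig (piecewise_rule C K sbar) \<le> risk n M X Sig s)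
    \<longleftrightarrow> (\<forall>t. (\<forall>k\<in>{1..K}. t k \<in> perms n) \<longrightarrow>
          risk n M X Sig (piecewise_rule C K sbar) \<le> risk n M X Sig (piecewise_rule C K t))"
    unfolding rule_class_def by blast
  also have "\<dots> \<longleftrightarrow> (\<forall>t. (\<forall>k\<in>{1..K}. t k \<in> perms n) \<longrightarrow>
          (\<Sum>k\<in>{1..K}. cell_mass k * L_risk n (cell_dist k) (sbar k))
          \<le> (\<Sum>k\<in>{1..K}. cell_mass k * L_risk n (cell_dist k) (t k)))"
    by (simp only: risk_piecewise_rule)
  also have "\<dots> \<longleftrightarrow> (\<forall>k\<in>{1..K}. \<forall>\<sigma>\<in>perms n. L_risk n (cell_dist k) (sbar k) \<le> L_risk n (cell_dist k) \<sigma>)"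
    by (rule weighted_sum_minimal_iff) (use assms cell_mass_pos in auto)
  finally show ?thesis using assms unfolding kemeny_median_def by blast
qed

lemma risk_minimizers_eq:
  "{s \<in> rule_class n C K. \<forall>s'\<in>rule_class n C K. risk n M X Sig s \<le> risk n M X Sig s'}
   = {piecewise_rule C K sbar | sbar. \<forall>k\<in>{1..K}. kemeny_median n (cell_dist k) (sbar k)}"
proof (intro set_eqI iffI)
  fix s assume "s \<in> {s \<in> rule_class n C K. \<forall>s'\<in>rule_class n C K. risk n M X Sig s \<le> risk n M X Sig s'}"
  then obtain sbar where "s = piecewise_rule C K sbar" "\<forall>k\<in>{1..K}. sbar k \<in> perms n"
    "\<forall>s'\<in>rule_class n C K. risk n M X Sig s \<le> risk n M X Sig s'"
    unfolding rule_class_def by blast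
  thus "s \<in> {piecewise_rule C K sbar | sbar. \<forall>k\<in>{1..K}. kemeny_median n (cell_dist k) (sbar k)}"
    using risk_minimal_iff_kemeny_medians by blast
next
  fix s assume "s \<in> {piecewise_rule C K sbar | sbar. \<forall>k\<in>{1..K}. kemeny_median n (cell_dist k) (sbar k)}"
  then obtain sbar where s: "s = piecewise_rule C K sbar" and med: "\<forall>k\<in>{1..K}. kemeny_median n (cell_dist k) (sbar k)"
    by blast
  hence perms: "\<forall>k\<in>{1..K}. sbar k \<in> perms n" by (simp add: kemeny_median_def)
  hence "s \<in> rule_class n C K" unfolding s rule_class_def by blast
  thus "s \<in> {s \<in> rule_class n C K. \<forall>s'\<in>rule_class n C K. risk n M X Sig s \<le> risk n M X Sig s'}"
    using risk_minimal_iff_kemeny_medians[OF perms] med s by blast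
qed

lemma sum_L_star_le_risk:
  assumes "s \<in> rule_class n C K"
  shows "(\<Sum>k\<in>{1..K}. cell_mass k * L_star n (cell_dist k)) \<le> risk n M X Sig s"
proof -
  obtain sbar where s: "s = piecewise_rule C K sbar" and sbar: "\<forall>k\<in>{1..K}. sbar k \<in> perms n"
    using assms unfolding rule_class_def by blast
  have "(\<Sum>k\<in>{1..K}. cell_mass k * L_star n (cell_dist k))
    \<le> (\<Sum>k\<in>{1..K}. cell_mass k * L_risk n (cell_dist k) (sbar k))"
    by (intro sum_mono mult_left_mono L_star_le) (use sbar cell_mass_pos in \<open>auto simp: less_imp_le\<close>)
  thus ?thesis by (simp add: s risk_piecewise_rule)
qed

lemma sum_L_star_eq_risk_of_medians:
  "\<exists>s\<in>rule_class n C K. risk n M X Sig s = (\<Sum>k\<in>{1..K}. cell_mass k * L_star n (cell_dist k))"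
proof -
  have "\<forall>k. \<exists>\<sigma>. \<sigma> \<in> perms n \<and> L_risk n (cell_dist k) \<sigma> = L_star n (cell_dist k)"
    using L_star_attained by blast
  from choice[OF this] obtain sbar
    where sbar: "\<forall>k. sbar k \<in> perms n \<and> L_risk n (cell_dist k) (sbar k) = L_star n (cell_dist k)"
    by blast
  hence "piecewise_rule C K sbar \<in> rule_class n C K" unfolding rule_class_def by blast
  moreover have "risk n M X Sig (piecewise_rule C K sbar) = (\<Sum>k\<in>{1..K}. cell_mass k * L_star n (cell_dist k))"
    using sbar by (simp add: risk_piecewise_rule)
  ultimately show ?thesis by blast
qed

lemma risk_minimizer_unique_if_SST:
  assumes "\<forall>k\<in>{1..K}. SST n (cell_dist k)"
  shows "{s \<in> rule_class n C K. \<forall>s'\<in>rule_class n C K. risk n M X Sig s \<le> risk n M X Sig s'}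
    = {piecewise_rule C K (\<lambda>k. sigma_star n (cell_dist k))}"
proof -
  let ?s = "\<lambda>k. sigma_star n (cell_dist k)"
  have median_iff: "kemeny_median n (cell_dist k) \<sigma> \<longleftrightarrow> \<sigma> = ?s k" if "k \<in> {1..K}" for k \<sigma>
    using kemeny_median_iff_sigma_star sum_cell_dist assms that by blast
  have "{piecewise_rule C K sbar | sbar. \<forall>k\<in>{1..K}. kemeny_median n (cell_dist k) (sbar k)}
    = {piecewise_rule C K ?s}"
  proof (intro set_eqI iffI)
    fix s assume "s \<in> {piecewise_rule C K sbar | sbar. \<forall>k\<in>{1..K}. kemeny_median n (cell_dist k) (sbar k)}"
    then obtain sbar where "s = piecewise_rule C K sbar" "\<forall>k\<in>{1..K}. kemeny_median n (cell_dist k) (sbar k)"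
      by blast
    thus "s \<in> {piecewise_rule C K ?s}"
      using median_iff piecewise_rule_cong[OF cells_disjoint, of sbar ?s] by simp
  qed (use median_iff in blast)
  thus ?thesis using risk_minimizers_eq by simp
qed

end

theorem proposition8:
  fixes M :: "'w measure" and N :: "'x measure"
    and X :: "'w \<Rightarrow> 'x" and Sig :: "'w \<Rightarrow> (nat \<Rightarrow> nat)"
    and n K :: nat and C :: "nat \<Rightarrow> 'x set"
  assumes "prob_space M"
    and "X \<in> M \<rightarrow>\<^sub>M N"
    and "Sig \<in> M \<rightarrow>\<^sub>M count_space (perms n)"
    and "K \<ge> 1"
    and "\<And>k. k \<in> {1..K} \<Longrightarrow> C k \<in> sets N"
    and "\<And>k l. k \<in> {1..K} \<Longrightarrow> l \<in> {1..K} \<Longrightarrow> k \<noteq> l \<Longrightarrow> C k \<inter> C l = {}"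
    and "(\<Union>k\<in>{1..K}. C k) = space N"
    and "\<And>k. k \<in> {1..K} \<Longrightarrow> measure (distr M N X) (C k) > 0"
  shows
    "({s \<in> rule_class n C K. \<forall>s'\<in>rule_class n C K. risk n M X Sig s \<le> risk n M X Sig s'}
       = {piecewise_rule C K sbar | sbar.
            \<forall>k\<in>{1..K}. kemeny_median n (cond_dist M X Sig (C k)) (sbar k)})
     \<and> (\<exists>s\<in>rule_class n C K. risk n M X Sig s =
         (\<Sum>k\<in>{1..K}. measure (distr M N X) (C k) * L_star n (cond_dist M X Sig (C k))))
     \<and> (\<forall>s\<in>rule_class n C K.
         (\<Sum>k\<in>{1..K}. measure (distr M N X) (C k) * L_star n (cond_dist M X Sig (C k)))
           \<le> risk n M X Sig s)
     \<and> ((\<forall>k\<in>{1..K}. SST n (cond_dist M X Sig (C k))) \<longrightarrow>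
       {s \<in> rule_class n C K. \<forall>s'\<in>rule_class n C K. risk n M X Sig s \<le> risk n M X Sig s'}
       = {piecewise_rule C K (\<lambda>k. sigma_star n (cond_dist M X Sig (C k)))})"
proof -
  interpret partitioned_ranking_model M N X Sig n K C
    by (intro partitioned_ranking_model.intro partitioned_ranking_model_axioms.intro assms(1-3,5,7,8))
      (use assms(6) in \<open>auto simp: disjoint_family_on_def\<close>)
  show ?thesis
    using risk_minimizers_eq sum_L_star_eq_risk_of_medians sum_L_star_le_risk
      risk_minimizer_unique_if_SST
    by (intro conjI impI) blast+
qed

end
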